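(* Assume $\sigma$ is $1$-Lipschitz and $M_2<\infty$. Let $\bar w=(\bar w_1,\bar w_2)\in\mathsf W$ be a minimizer of $w\mapsto\|f_w-f_{\mathbf P}\|_{\mathbb L_2(\mu)}$ over $\mathsf W$, and let $p=p_1\otimes p_2=\mathcal N(\bar w_1,\tau_1^2\mathbf I_{D_0D_1})\otimes\mathcal N(\bar w_2,\tau_2^2\mathbf I_{D_1D_2})$ with $\tau_1,\tau_2>0$. Then, with $G_2(w_1)=\|f_{w_1,\bar w_2}-f_{\bar w}\|^2_{\mathbb L_2(\mu)}$, $$\int G_2(w_1)\,p_1(dw_1)\le D_0\big(M_2\tau_1\|\bar w_2\|_{1,2}\big)^2\le C_1D_0D_1\tau_1^2,\qquad C_1=(M_2\|\bar w_2\|_F)^2.$$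
   Context: $\mathcal X\subset\mathbb R^{D_0}$ Borel, $\mu$ a $\sigma$-finite measure on $\mathcal X$, $M_2^2=D_0^{-1}\int\|x\|_2^2\mu(dx)$, $\|f\|^2_{\mathbb L_2(\mu)}=\int\|f(x)\|_2^2\mu(dx)$, $f_{\mathbf P}\in\mathbb L_2(\mu)$ a given target. Parameters $w=(w_1,w_2)\in\mathsf W=\mathbb R^{D_0\times D_1}\times\mathbb R^{D_1\times D_2}$; $f_w=f_{w_1,w_2}$, $f_w(x)=w_2^\top\bar\sigma(w_1^\top x)$, $\bar\sigma$ coordinatewise. $\|\cdot\|_F$ is the Frobenius norm and, for $\bar w_2=(\bar w_{2,ij})\in\mathbb R^{D_1\times D_2}$, $\|\bar w_2\|_{1,2}=\big(\sum_{j=1}^{D_2}(\sum_{i=1}^{D_1}|\bar w_{2,ij}|)^2\big)^{1/2}$. $1$-Lipschitz means $|\sigma(u)-\sigma(u')|\le|u-u'|$. *)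

theory Defs
  imports "HOL-Probability.Probability"
begin

text \<open>Two-layer network f_w(x) = w2^T sigma(w1^T x), with w1 a D0 x D1 matrix
  (rows indexed by 'd0, columns by 'd1) and w2 a D1 x D2 matrix.\<close>
definition nn :: "(real \<Rightarrow> real) \<Rightarrow> real^'d1^'d0 \<Rightarrow> real^'d2^'d1 \<Rightarrow> real^'d0 \<Rightarrow> real^'d2" where
  "nn \<sigma> w1 w2 x = transpose w2 *v (\<chi> i. \<sigma> ((transpose w1 *v x) $ i))"

definition L2sq :: "'a measure \<Rightarrow> ('a \<Rightarrow> real^'d) \<Rightarrow> ennreal" where
  "L2sq \<mu> f = (\<integral>\<^sup>+ x. ennreal ((norm (f x))\<^sup>2) \<partial>\<mu>)"

definition M2 :: "(real^'d0) measure \<Rightarrow> real" where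
  "M2 \<mu> = sqrt ((1 / real CARD('d0)) * (\<integral> x. (norm x)\<^sup>2 \<partial>\<mu>))"

definition frob_norm :: "real^'n^'m \<Rightarrow> real" where
  "frob_norm w = sqrt (\<Sum>i\<in>UNIV. \<Sum>j\<in>UNIV. (w $ i $ j)\<^sup>2)"

definition norm12 :: "real^'n^'m \<Rightarrow> real" where
  "norm12 w = sqrt (\<Sum>j\<in>UNIV. (\<Sum>i\<in>UNIV. \<bar>w $ i $ j\<bar>)\<^sup>2)"

definition gauss_mat :: "real^'n^'m \<Rightarrow> real \<Rightarrow> (real^'n^'m) measure" where
  "gauss_mat m \<tau> = density lborel
     (\<lambda>w. ennreal (\<Prod>i\<in>UNIV. \<Prod>j\<in>UNIV. normal_density (m $ i $ j) \<tau> (w $ i $ j)))"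

end

theory Submission
  imports Defs
begin

(* Since \<sigma> is 1-Lipschitz, the j-th output of f_{w1,wb2}(x) - f_{wb}(x) is bounded by
   \<Sum>_i |wb2_ij| |z_i| with z = (w1 - wb1)^T x, and weighted Cauchy-Schwarz bounds its square by
   (\<Sum>_i |wb2_ij|) (\<Sum>_i |wb2_ij| z_i^2).  Under p1 the entries of w1 - wb1 are independent,
   centred, of variance \<tau>1^2, so E z_i^2 = \<tau>1^2 |x|^2; summing over j and integrating in x
   (Tonelli) gives \<tau>1^2 ||wb2||_{1,2}^2 \<integral> |x|^2 d\<mu> = D0 (M2 \<tau>1 ||wb2||_{1,2})^2.
   The second inequality is Cauchy-Schwarz in the form ||w||_{1,2}^2 \<le> D1 ||w||_F^2. *)

lemma borel_measurable_matrix_nth[measurable]: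
  "(\<lambda>w::real^'n^'m. w $ k $ i) \<in> borel_measurable borel"
  by (intro borel_measurable_continuous_onI continuous_intros)

lemma has_bochner_integral_lborel_prod_Basis:
  fixes f :: "'a::euclidean_space \<Rightarrow> real \<Rightarrow> real"
  assumes int: "\<And>b. b \<in> Basis \<Longrightarrow> integrable lborel (f b)"
  shows "has_bochner_integral lborel (\<lambda>x::'a. \<Prod>b\<in>Basis. f b (x \<bullet> b))
           (\<Prod>b\<in>Basis. \<integral>t. f b t \<partial>lborel)"
proof -
  interpret product_sigma_finite "\<lambda>_::'a. lborel :: real measure"
    by standard
  have coords: "(\<Sum>b'\<in>Basis. g b' *\<^sub>R b') \<bullet> b = g b" if "b \<in> Basis" for g :: "'a \<Rightarrow> real" and b
    using that by (simp add: inner_sum_left inner_Basis if_distrib cong: if_cong)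
  have "has_bochner_integral (\<Pi>\<^sub>M b\<in>Basis. lborel) (\<lambda>g. \<Prod>b\<in>Basis. f b (g b))
          (\<Prod>b\<in>Basis. \<integral>t. f b t \<partial>lborel)"
    using int by (simp add: has_bochner_integral_iff product_integrable_prod product_integral_prod)
  then have "has_bochner_integral (\<Pi>\<^sub>M b\<in>Basis. lborel)
      (\<lambda>g. \<Prod>b\<in>Basis. f b ((\<Sum>b'\<in>Basis. g b' *\<^sub>R b') \<bullet> b)) (\<Prod>b\<in>Basis. \<integral>t. f b t \<partial>lborel)"
    by (simp add: coords)
  then show ?thesis
    unfolding lborel_eq[where 'a='a]
    by (intro has_bochner_integral_distr) (use int in measurable)
qed

lemma bij_betw_matrix_Basis:
  "bij_betw (\<lambda>(k, i). axis k (axis i 1)) UNIV (Basis :: (real^'n^'m) set)"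
  by (auto simp: bij_betw_def inj_def axis_eq_axis Basis_vec_def)

lemma has_bochner_integral_lborel_prod_matrix:
  fixes g :: "'m::finite \<times> 'n::finite \<Rightarrow> real \<Rightarrow> real"
  assumes int: "\<And>p. integrable lborel (g p)"
  shows "has_bochner_integral lborel (\<lambda>w::real^'n^'m. \<Prod>p\<in>UNIV. g p (w $ fst p $ snd p))
           (\<Prod>p\<in>UNIV. \<integral>t. g p t \<partial>lborel)"
proof -
  define e :: "'m \<times> 'n \<Rightarrow> real^'n^'m" where "e = (\<lambda>(k, i). axis k (axis i 1))"
  have e: "bij_betw e UNIV Basis"
    unfolding e_def by (rule bij_betw_matrix_Basis)
  have inner_e: "w \<bullet> e p = w $ fst p $ snd p" for w :: "real^'n^'m" and p
    by (simp add: e_def inner_axis case_prod_beta)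
  define f where "f b = g (inv_into UNIV e b)" for b
  have f_e: "f (e p) = g p" for p
    using e by (simp add: f_def bij_betw_inv_into_left)
  have "has_bochner_integral lborel (\<lambda>w::real^'n^'m. \<Prod>b\<in>Basis. f b (w \<bullet> b))
           (\<Prod>b\<in>Basis. \<integral>t. f b t \<partial>lborel)"
    using e int by (intro has_bochner_integral_lborel_prod_Basis)
      (auto simp: f_def bij_betw_def)
  then show ?thesis
    by (simp add: prod.reindex_bij_betw[OF e, symmetric] f_e inner_e)
qed

lemma has_bochner_integral_gauss_mat_moment:
  fixes m :: "real^'n^'m" and n :: "'m \<times> 'n \<Rightarrow> nat"
  assumes "\<tau> > 0"
  shows "has_bochner_integral (gauss_mat m \<tau>)
           (\<lambda>w. \<Prod>p\<in>UNIV. (w $ fst p $ snd p - m $ fst p $ snd p) ^ n p)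
           (\<Prod>p\<in>UNIV. \<integral>t. normal_density (m $ fst p $ snd p) \<tau> t * (t - m $ fst p $ snd p) ^ n p \<partial>lborel)"
proof -
  have density: "(\<Prod>i\<in>UNIV. \<Prod>j\<in>UNIV. normal_density (m $ i $ j) \<tau> (w $ i $ j))
      = (\<Prod>p\<in>UNIV. normal_density (m $ fst p $ snd p) \<tau> (w $ fst p $ snd p))" for w :: "real^'n^'m"
    by (simp add: prod.cartesian_product case_prod_beta)
  have "has_bochner_integral lborel
      (\<lambda>w::real^'n^'m. \<Prod>p\<in>UNIV. normal_density (m $ fst p $ snd p) \<tau> (w $ fst p $ snd p)
                          * (w $ fst p $ snd p - m $ fst p $ snd p) ^ n p)
      (\<Prod>p\<in>UNIV. \<integral>t. normal_density (m $ fst p $ snd p) \<tau> t * (t - m $ fst p $ snd p) ^ n p \<partial>lborel)"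
    using assms by (intro has_bochner_integral_lborel_prod_matrix integrable_normal_moment)
  then show ?thesis
    unfolding gauss_mat_def density
    by (intro has_bochner_integral_density) (measurable, measurable, auto simp: prod.distrib intro!: prod_nonneg)
qed

lemma prob_space_gauss_mat:
  assumes "\<tau> > 0"
  shows "prob_space (gauss_mat m \<tau>)"
proof -
  have "has_bochner_integral (gauss_mat m \<tau>) (\<lambda>_. 1::real) 1"
    using has_bochner_integral_gauss_mat_moment[OF assms, of m "\<lambda>_. 0"] assms
    by simp
  then show ?thesis
    by (intro prob_spaceI) (auto simp: has_bochner_integral_iff integrable_iff_bounded emeasure_eq_ennreal_measure)
qed

lemma has_bochner_integral_gauss_mat_cross_moment:
  fixes m :: "real^'n^'m"
  assumes "\<tau> > 0"
  shows "has_bochner_integral (gauss_mat m \<tau>) (\<lambda>w. (w $ k $ i - m $ k $ i) * (w $ k' $ i' - m $ k' $ i'))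
           (if (k, i) = (k', i') then \<tau>\<^sup>2 else 0)"
proof -
  define n where "n p = (if p = (k, i) then 1 else 0) + (if p = (k', i') then 1 else (0::nat))" for p
  define moment where "moment p = (\<integral>t. normal_density (m $ fst p $ snd p) \<tau> t * (t - m $ fst p $ snd p) ^ n p \<partial>lborel)" for p
  have integrand: "(\<Prod>p\<in>UNIV. (w $ fst p $ snd p - m $ fst p $ snd p) ^ n p)
      = (w $ k $ i - m $ k $ i) * (w $ k' $ i' - m $ k' $ i')" for w :: "real^'n^'m"
  proof -
    have "x ^ n p = (if p = (k, i) then x else 1) * (if p = (k', i') then x else 1)" for x :: real and p
      by (simp add: n_def power_add)
    then show ?thesis
      by (simp add: prod.distrib)
  qed
  have "(\<Prod>p\<in>UNIV. moment p) = (if (k, i) = (k', i') then \<tau>\<^sup>2 else 0)"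
  proof (cases "(k, i) = (k', i')")
    case True
    then have "moment p = (if p = (k, i) then \<tau>\<^sup>2 else 1)" for p
      using assms integral_normal_moment_even[OF assms, of _ 1]
      by (auto simp: moment_def n_def power2_eq_square)
    then show ?thesis
      using True by simp
  next
    case False
    then have "moment (k, i) = 0"
      using integral_normal_moment_odd[OF assms, of _ 0] by (auto simp: moment_def n_def)
    then show ?thesis
      using False by auto
  qed
  then show ?thesis
    using has_bochner_integral_gauss_mat_moment[OF assms, of m n]
    by (simp add: integrand moment_def)
qed

lemma has_bochner_integral_gauss_mat_vector_matrix_mult_sq:
  fixes m :: "real^'n^'m"
  assumes "\<tau> > 0"
  shows "has_bochner_integral (gauss_mat m \<tau>) (\<lambda>w. ((x v* (w - m)) $ i)\<^sup>2) (\<tau>\<^sup>2 * (norm x)\<^sup>2)"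
proof -
  have expand: "((x v* (w - m)) $ i)\<^sup>2
      = (\<Sum>k\<in>UNIV. \<Sum>k'\<in>UNIV. (x $ k * x $ k') * ((w $ k $ i - m $ k $ i) * (w $ k' $ i - m $ k' $ i)))"
    for w :: "real^'n^'m"
    by (simp add: vector_matrix_mult_def power2_eq_square sum_product algebra_simps)
  have "has_bochner_integral (gauss_mat m \<tau>) (\<lambda>w. ((x v* (w - m)) $ i)\<^sup>2)
      (\<Sum>k\<in>UNIV. \<Sum>k'\<in>UNIV. (x $ k * x $ k') * (if (k, i) = (k', i) then \<tau>\<^sup>2 else 0))"
    unfolding expand
    by (intro has_bochner_integral_sum has_bochner_integral_mult_right
        has_bochner_integral_gauss_mat_cross_moment assms)
  moreover have "(\<Sum>k\<in>UNIV. \<Sum>k'\<in>UNIV. (x $ k * x $ k') * (if (k, i) = (k', i) then \<tau>\<^sup>2 else 0))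
      = \<tau>\<^sup>2 * (norm x)\<^sup>2"
    by (simp add: power2_norm_eq_inner inner_vec_def if_distrib sum_distrib_left mult_ac cong: if_cong)
  ultimately show ?thesis
    by simp
qed

lemma Cauchy_Schwarz_ineq_sum_weighted:
  fixes a t :: "'i \<Rightarrow> real"
  assumes "\<And>i. i \<in> I \<Longrightarrow> a i \<ge> 0"
  shows "(\<Sum>i\<in>I. a i * t i)\<^sup>2 \<le> (\<Sum>i\<in>I. a i) * (\<Sum>i\<in>I. a i * (t i)\<^sup>2)"
  using Cauchy_Schwarz_ineq_sum[of "\<lambda>i. sqrt (a i)" "\<lambda>i. sqrt (a i) * t i" I] assms
  by (simp add: power_mult_distrib mult.assoc[symmetric] cong: sum.cong)

lemma norm_nn_diff_sq_le:
  fixes v :: "real^'p^'n"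
  assumes lip: "\<And>u u'. \<bar>\<sigma> u - \<sigma> u'\<bar> \<le> \<bar>u - u'\<bar>"
  shows "(norm (nn \<sigma> w v x - nn \<sigma> m v x))\<^sup>2
           \<le> (\<Sum>j\<in>UNIV. (\<Sum>i\<in>UNIV. \<bar>v $ i $ j\<bar>) * (\<Sum>i\<in>UNIV. \<bar>v $ i $ j\<bar> * ((x v* (w - m)) $ i)\<^sup>2))"
proof -
  define d where "d i = \<sigma> ((x v* w) $ i) - \<sigma> ((x v* m) $ i)" for i
  have d_le: "\<bar>d i\<bar> \<le> \<bar>(x v* (w - m)) $ i\<bar>" for i
    using lip by (simp add: d_def vector_matrix_mult_diff_rdistrib)
  have component: "(nn \<sigma> w v x - nn \<sigma> m v x) $ j = (\<Sum>i\<in>UNIV. v $ i $ j * d i)" for j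
    by (simp add: nn_def d_def vector_matrix_mult_def sum_subtractf[symmetric] right_diff_distrib mult.commute)
  have "((nn \<sigma> w v x - nn \<sigma> m v x) $ j)\<^sup>2
      \<le> (\<Sum>i\<in>UNIV. \<bar>v $ i $ j\<bar>) * (\<Sum>i\<in>UNIV. \<bar>v $ i $ j\<bar> * ((x v* (w - m)) $ i)\<^sup>2)" for j
  proof -
    have abs_le: "\<bar>(nn \<sigma> w v x - nn \<sigma> m v x) $ j\<bar> \<le> (\<Sum>i\<in>UNIV. \<bar>v $ i $ j\<bar> * \<bar>(x v* (w - m)) $ i\<bar>)"
      unfolding component
      by (rule order_trans[OF sum_abs]) (simp add: abs_mult mult_left_mono d_le sum_mono)
    have "((nn \<sigma> w v x - nn \<sigma> m v x) $ j)\<^sup>2 \<le> (\<Sum>i\<in>UNIV. \<bar>v $ i $ j\<bar> * \<bar>(x v* (w - m)) $ i\<bar>)\<^sup>2"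
      using power_mono[OF abs_le abs_ge_zero, of 2] by simp
    also have "\<dots> \<le> (\<Sum>i\<in>UNIV. \<bar>v $ i $ j\<bar>) * (\<Sum>i\<in>UNIV. \<bar>v $ i $ j\<bar> * \<bar>(x v* (w - m)) $ i\<bar>\<^sup>2)"
      by (rule Cauchy_Schwarz_ineq_sum_weighted) simp
    finally show ?thesis
      by simp
  qed
  then show ?thesis
    by (simp add: power2_norm_eq_inner inner_vec_def power2_eq_square[symmetric] sum_mono)
qed

lemma power2_norm12: "(norm12 w)\<^sup>2 = (\<Sum>j\<in>UNIV. (\<Sum>i\<in>UNIV. \<bar>w $ i $ j\<bar>)\<^sup>2)"
  by (simp add: norm12_def sum_nonneg)

lemma has_bochner_integral_gauss_mat_nn_diff_bound:
  fixes m :: "real^'n^'m" and v :: "real^'p^'n"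
  assumes "\<tau> > 0"
  shows "has_bochner_integral (gauss_mat m \<tau>)
           (\<lambda>w. \<Sum>j\<in>UNIV. (\<Sum>i\<in>UNIV. \<bar>v $ i $ j\<bar>) * (\<Sum>i\<in>UNIV. \<bar>v $ i $ j\<bar> * ((x v* (w - m)) $ i)\<^sup>2))
           (\<tau>\<^sup>2 * (norm x)\<^sup>2 * (norm12 v)\<^sup>2)"
proof -
  have "has_bochner_integral (gauss_mat m \<tau>)
      (\<lambda>w. \<Sum>j\<in>UNIV. (\<Sum>i\<in>UNIV. \<bar>v $ i $ j\<bar>) * (\<Sum>i\<in>UNIV. \<bar>v $ i $ j\<bar> * ((x v* (w - m)) $ i)\<^sup>2))
      (\<Sum>j\<in>UNIV. (\<Sum>i\<in>UNIV. \<bar>v $ i $ j\<bar>) * (\<Sum>i\<in>UNIV. \<bar>v $ i $ j\<bar> * (\<tau>\<^sup>2 * (norm x)\<^sup>2)))"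
    by (intro has_bochner_integral_sum has_bochner_integral_mult_right
        has_bochner_integral_gauss_mat_vector_matrix_mult_sq assms)
  moreover have "(\<Sum>j\<in>UNIV. (\<Sum>i\<in>UNIV. \<bar>v $ i $ j\<bar>) * (\<Sum>i\<in>UNIV. \<bar>v $ i $ j\<bar> * c))
      = c * (\<Sum>j\<in>UNIV. (\<Sum>i\<in>UNIV. \<bar>v $ i $ j\<bar>)\<^sup>2)" for c
    by (simp add: sum_distrib_left sum_distrib_right[symmetric] power2_eq_square mult_ac)
  ultimately show ?thesis
    by (simp add: power2_norm12)
qed

lemma nn_integral_gauss_mat_L2sq_nn_diff_le:
  fixes \<mu> :: "(real^'m) measure" and m :: "real^'n^'m" and v :: "real^'p^'n"
  assumes \<mu>: "sigma_finite_measure \<mu>" "(\<lambda>x. x) \<in> borel_measurable \<mu>"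
    and lip: "\<And>u u'. \<bar>\<sigma> u - \<sigma> u'\<bar> \<le> \<bar>u - u'\<bar>"
    and "\<tau> > 0"
  shows "(\<integral>\<^sup>+ w. L2sq \<mu> (\<lambda>x. nn \<sigma> w v x - nn \<sigma> m v x) \<partial>gauss_mat m \<tau>)
           \<le> ennreal (\<tau>\<^sup>2 * (norm12 v)\<^sup>2) * (\<integral>\<^sup>+ x. ennreal ((norm x)\<^sup>2) \<partial>\<mu>)"
proof -
  define G where "G = gauss_mat m \<tau>"
  define B where "B w x = (\<Sum>j\<in>UNIV. (\<Sum>i\<in>UNIV. \<bar>v $ i $ j\<bar>) * (\<Sum>i\<in>UNIV. \<bar>v $ i $ j\<bar> * ((x v* (w - m)) $ i)\<^sup>2))"
    for w x
  interpret G: prob_space G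
    unfolding G_def using \<open>\<tau> > 0\<close> by (rule prob_space_gauss_mat)
  interpret pair_sigma_finite G \<mu>
    using \<mu>(1) by (simp add: pair_sigma_finite_def G.sigma_finite_measure_axioms)
  have [measurable]: "(\<lambda>x. x $ k) \<in> borel_measurable \<mu>" for k
    by (rule measurable_compose[OF \<mu>(2)]) measurable
  have [measurable]: "(\<lambda>x. (norm x)\<^sup>2) \<in> borel_measurable \<mu>"
    by (rule measurable_compose[OF \<mu>(2)]) measurable
  have sets_G: "sets G = sets borel"
    by (simp add: G_def gauss_mat_def)
  have B_measurable: "(\<lambda>(w, x). B w x) \<in> borel_measurable (G \<Otimes>\<^sub>M \<mu>)"
    unfolding measurable_cong_sets[OF sets_pair_measure_cong[OF sets_G refl] refl]
    by (simp add: B_def vector_matrix_mult_def) measurable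
  have B_nonneg: "B w x \<ge> 0" for w x
    by (simp add: B_def sum_nonneg)
  have "(\<integral>\<^sup>+ w. L2sq \<mu> (\<lambda>x. nn \<sigma> w v x - nn \<sigma> m v x) \<partial>G)
      \<le> (\<integral>\<^sup>+ w. \<integral>\<^sup>+ x. ennreal (B w x) \<partial>\<mu> \<partial>G)"
    unfolding L2sq_def B_def by (intro nn_integral_mono ennreal_leI norm_nn_diff_sq_le lip)
  also have "\<dots> = (\<integral>\<^sup>+ x. \<integral>\<^sup>+ w. ennreal (B w x) \<partial>G \<partial>\<mu>)"
    by (rule Fubini'[symmetric]) (use B_measurable in measurable)
  also have "\<dots> = (\<integral>\<^sup>+ x. ennreal (\<tau>\<^sup>2 * (norm12 v)\<^sup>2) * ennreal ((norm x)\<^sup>2) \<partial>\<mu>)"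
  proof (intro nn_integral_cong)
    fix x
    have "has_bochner_integral G (\<lambda>w. B w x) (\<tau>\<^sup>2 * (norm x)\<^sup>2 * (norm12 v)\<^sup>2)"
      unfolding G_def B_def using \<open>\<tau> > 0\<close> by (rule has_bochner_integral_gauss_mat_nn_diff_bound)
    then show "(\<integral>\<^sup>+ w. ennreal (B w x) \<partial>G) = ennreal (\<tau>\<^sup>2 * (norm12 v)\<^sup>2) * ennreal ((norm x)\<^sup>2)"
      using B_nonneg
      by (simp add: has_bochner_integral_iff nn_integral_eq_integral ennreal_mult'[symmetric] mult_ac)
  qed
  also have "\<dots> = ennreal (\<tau>\<^sup>2 * (norm12 v)\<^sup>2) * (\<integral>\<^sup>+ x. ennreal ((norm x)\<^sup>2) \<partial>\<mu>)"
    by (rule nn_integral_cmult) measurable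
  finally show ?thesis
    unfolding G_def .
qed

lemma norm12_le_frob_norm: "(norm12 (w :: real^'n^'m))\<^sup>2 \<le> real CARD('m) * (frob_norm w)\<^sup>2"
proof -
  have "(\<Sum>i\<in>UNIV. 1 * \<bar>w $ i $ j\<bar>)\<^sup>2 \<le> real CARD('m) * (\<Sum>i\<in>UNIV. (w $ i $ j)\<^sup>2)" for j
    using Cauchy_Schwarz_ineq_sum[of "\<lambda>_. 1" "\<lambda>i. \<bar>w $ i $ j\<bar>" UNIV] by simp
  then have "(norm12 w)\<^sup>2 \<le> (\<Sum>j\<in>UNIV. real CARD('m) * (\<Sum>i\<in>UNIV. (w $ i $ j)\<^sup>2))"
    unfolding power2_norm12 by (simp add: sum_mono)
  also have "\<dots> = real CARD('m) * (frob_norm w)\<^sup>2"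
    by (simp add: frob_norm_def sum_nonneg sum_distrib_left sum.swap[of _ "UNIV :: 'n set"])
  finally show ?thesis .
qed

theorem lemma3:
  fixes X :: "(real^'d0) set" and \<mu> :: "(real^'d0) measure"
    and \<sigma> :: "real \<Rightarrow> real" and fP :: "real^'d0 \<Rightarrow> real^'d2"
    and wb1 :: "real^'d1^'d0" and wb2 :: "real^'d2^'d1"
    and \<tau>1 \<tau>2 :: real
  assumes X_borel: "X \<in> sets borel"
    and \<mu>_sets: "sets \<mu> = sets (restrict_space borel X)"
    and \<mu>_sfin: "sigma_finite_measure \<mu>"
    and \<sigma>_lip: "\<And>u u'. \<bar>\<sigma> u - \<sigma> u'\<bar> \<le> \<bar>u - u'\<bar>"
    and M2_fin: "(\<integral>\<^sup>+ x. ennreal ((norm x)\<^sup>2) \<partial>\<mu>) < \<infinity>"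
    and fP_meas: "fP \<in> borel_measurable \<mu>"
    and fP_L2: "L2sq \<mu> fP < \<infinity>"
    and minimizer: "\<And>(w1::real^'d1^'d0) (w2::real^'d2^'d1). L2sq \<mu> (\<lambda>x. nn \<sigma> wb1 wb2 x - fP x)
                              \<le> L2sq \<mu> (\<lambda>x. nn \<sigma> w1 w2 x - fP x)"
    and \<tau>1_pos: "\<tau>1 > 0" and \<tau>2_pos: "\<tau>2 > 0"
  shows "(\<integral>\<^sup>+ w1. L2sq \<mu> (\<lambda>x. nn \<sigma> w1 wb2 x - nn \<sigma> wb1 wb2 x) \<partial>(gauss_mat wb1 \<tau>1))
           \<le> ennreal (real CARD('d0) * (M2 \<mu> * \<tau>1 * norm12 wb2)\<^sup>2)
       \<and> real CARD('d0) * (M2 \<mu> * \<tau>1 * norm12 wb2)\<^sup>2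
           \<le> (M2 \<mu> * frob_norm wb2)\<^sup>2 * real CARD('d0) * real CARD('d1) * \<tau>1\<^sup>2"
proof
  have id_measurable: "(\<lambda>x. x) \<in> borel_measurable \<mu>"
    unfolding measurable_cong_sets[OF \<mu>_sets refl]
    by (rule measurable_restrict_space1) simp
  have "integrable \<mu> (\<lambda>x. (norm x)\<^sup>2)"
    using M2_fin by (intro integrableI_bounded measurable_compose[OF id_measurable]) auto
  then have second_moment: "(\<integral>\<^sup>+ x. ennreal ((norm x)\<^sup>2) \<partial>\<mu>) = ennreal (real CARD('d0) * (M2 \<mu>)\<^sup>2)"
    by (simp add: nn_integral_eq_integral M2_def integral_nonneg_AE)
  show "(\<integral>\<^sup>+ w1. L2sq \<mu> (\<lambda>x. nn \<sigma> w1 wb2 x - nn \<sigma> wb1 wb2 x) \<partial>(gauss_mat wb1 \<tau>1))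
      \<le> ennreal (real CARD('d0) * (M2 \<mu> * \<tau>1 * norm12 wb2)\<^sup>2)"
    using nn_integral_gauss_mat_L2sq_nn_diff_le[OF \<mu>_sfin id_measurable \<sigma>_lip \<tau>1_pos, where m = wb1 and v = wb2]
    by (simp add: second_moment ennreal_mult'[symmetric] power_mult_distrib mult_ac)
  show "real CARD('d0) * (M2 \<mu> * \<tau>1 * norm12 wb2)\<^sup>2
      \<le> (M2 \<mu> * frob_norm wb2)\<^sup>2 * real CARD('d0) * real CARD('d1) * \<tau>1\<^sup>2"
    using mult_left_mono[OF norm12_le_frob_norm[of wb2], of "real CARD('d0) * (M2 \<mu> * \<tau>1)\<^sup>2"]
    by (simp add: power_mult_distrib mult_ac)
qed

end
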